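(* Fix a positive integer $M$ and a nudging parameter $\mu>0$. Then there exist solutions $\mathbf{u}(\mathbf{x},t)$ of the 2D incompressible Euler equations $$\mathbf{u}_t+\mathbf{u}\cdot\nabla\mathbf{u}=-\nabla p,\qquad\nabla\cdot\mathbf{u}=0$$ on $\mathbb{T}^2$ which cannot be recovered by the nudged system $$\mathbf{v}_t+\mathbf{v}\cdot\nabla\mathbf{v}=-\nabla q+\mu P_M(\mathbf{u}-\mathbf{v}),\qquad\nabla\cdot\mathbf{v}=0$$ with arbitrary initial condition $\mathbf{v}^{in}$; that is, for such $\mathbf{u}$ there is an initial condition $\mathbf{v}^{in}$ for which the corresponding solution $\mathbf{v}$ does not satisfy $\|\mathbf{u}(t)-\mathbf{v}(t)\|_H\to0$ as $t\to\infty$.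
   Context: $\mathbb{T}^2=[0,2\pi)^2$ with periodic boundary conditions. Let $\mathcal{V}$ be the set of $\mathbb{R}^2$-valued $2\pi$-periodic trigonometric polynomials $\varphi$ with $\nabla\cdot\varphi=0$ and $\int_{\mathbb{T}^2}\varphi=0$; $H$ is the closure of $\mathcal{V}$ in $L^2$, $V^s$ its closure in the $H^s$ seminorm; solutions of the Euler equations are taken with initial data in $V^3$ (for which the equations are globally well-posed). $P_M$ is the projection onto the Fourier modes $\mathbf{n}\in\mathbb{Z}^2\setminus\{(0,0)\}$ with $|\mathbf{n}|\le M$. *)

theory Defs
  imports "HOL-Analysis.Analysis"
begin

text \<open>Fundamental domain of the torus T^2 = [0,2pi)^2, points as real^2.\<close>
definition torus_box :: "(real^2) set" where
  "torus_box = cbox 0 (\<chi> i. 2 * pi)"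

definition periodic2 :: "(real^2 \<Rightarrow> 'a) \<Rightarrow> bool" where
  "periodic2 f \<longleftrightarrow> (\<forall>x i. f (x + (2 * pi) *\<^sub>R axis i 1) = f x)"

definition fcoef :: "(real^2 \<Rightarrow> real) \<Rightarrow> int \<times> int \<Rightarrow> complex" where
  "fcoef g n = integral torus_box
      (\<lambda>y. complex_of_real (g y) * cis (- (of_int (fst n) * y$1 + of_int (snd n) * y$2)))
      / complex_of_real (4 * pi\<^sup>2)"

definition modes :: "nat \<Rightarrow> (int \<times> int) set" where
  "modes M = {n. n \<noteq> (0, 0) \<and> (fst n)\<^sup>2 + (snd n)\<^sup>2 \<le> (int M)\<^sup>2}"

definition projM :: "nat \<Rightarrow> (real^2 \<Rightarrow> real) \<Rightarrow> real^2 \<Rightarrow> real" where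
  "projM M g x = Re (\<Sum>n\<in>modes M. fcoef g n * cis (of_int (fst n) * x$1 + of_int (snd n) * x$2))"

definition projMv :: "nat \<Rightarrow> (real^2 \<Rightarrow> real^2) \<Rightarrow> real^2 \<Rightarrow> real^2" where
  "projMv M w x = (\<chi> j. projM M (\<lambda>y. w y $ j) x)"

definition L2norm :: "(real^2 \<Rightarrow> real^2) \<Rightarrow> real" where
  "L2norm w = sqrt (integral torus_box (\<lambda>x. (norm (w x))\<^sup>2))"

definition divergence :: "(real^2 \<Rightarrow> real^2) \<Rightarrow> real^2 \<Rightarrow> real" where
  "divergence w x = (\<Sum>j\<in>UNIV. frechet_derivative w (at x) (axis j 1) $ j)"

definition pgrad :: "(real^2 \<Rightarrow> real) \<Rightarrow> real^2 \<Rightarrow> real^2" where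
  "pgrad p x = (\<chi> i. frechet_derivative p (at x) (axis i 1))"

text \<open>Membership in V^3: periodic, divergence-free, mean-zero, with
  sum_n |n|^6 |hat w(n)|^2 finite.  (In 2D, H^3 embeds into C^1, so such fields are
  classically differentiable.)\<close>
definition in_V3 :: "(real^2 \<Rightarrow> real^2) \<Rightarrow> bool" where
  "in_V3 w \<longleftrightarrow> periodic2 w \<and> (\<forall>x. w differentiable (at x)) \<and>
     (\<forall>x. divergence w x = 0) \<and> integral torus_box w = 0 \<and>
     (\<lambda>n::int \<times> int. (real_of_int ((fst n)\<^sup>2 + (snd n)\<^sup>2)) ^ 3 *
        (\<Sum>j\<in>UNIV. (cmod (fcoef (\<lambda>y. w y $ j) n))\<^sup>2)) summable_on UNIV"

definition fluid_sol ::
  "(real \<Rightarrow> real^2 \<Rightarrow> real^2) \<Rightarrow> (real \<Rightarrow> real^2 \<Rightarrow> real^2) \<Rightarrow> (real \<Rightarrow> real^2 \<Rightarrow> real) \<Rightarrow> bool" where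
  "fluid_sol F u p \<longleftrightarrow> (\<forall>t\<ge>0. in_V3 (u t) \<and> periodic2 (p t) \<and>
     (\<forall>x. p t differentiable (at x) \<and>
        ((\<lambda>s. u s x) has_vector_derivative
           (F t x - frechet_derivative (u t) (at x) (u t x) - pgrad (p t) x)) (at t within {0..})))"

end

theory Submission
  imports Defs
begin

text \<open>The shear flow v = (sin (k x_2), 0) is a steady solution of the Euler equations with zero
  pressure, because its advection term (v \<cdot> \<nabla>) v vanishes identically. For k = M + 1 its only
  Fourier modes (0, \<plusminus>k) lie outside the band |n| \<le> M seen by P_M. So against the reference
  solution u = 0 the nudging term \<mu> P_M (u - v) is zero, v itself solves the nudged system, and
  the H-distance of u and v stays equal to sqrt 2 \<pi> forever.\<close>

lemma integral_cis_nx_0_2pi: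
  fixes m :: int
  assumes "m \<noteq> 0"
  shows "integral {0..2*pi} (\<lambda>t. cis (of_int m * t)) = 0"
proof -
  have "((\<lambda>t. cis (of_int m * t) / (\<i> * of_int m)) has_vector_derivative cis (of_int m * t))
      (at t within {0..2*pi})" for t
    unfolding has_vector_derivative_def using assms
    by (auto intro!: derivative_eq_intros simp: scaleR_conv_of_real field_simps)
  then have "((\<lambda>t. cis (of_int m * t)) has_integral
      cis (of_int m * (2 * pi)) / (\<i> * of_int m) - cis (of_int m * 0) / (\<i> * of_int m)) {0..2*pi}"
    by (intro fundamental_theorem_of_calculus) auto
  moreover have "cis (of_int m * (2 * pi)) = 1"
    using cis_multiple_2pi[of "of_int m"] by (simp add: mult_ac)
  ultimately show ?thesis
    by (simp add: integral_unique)
qed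

lemma integral_sin_nx_cis_0_2pi:
  fixes k :: nat and n :: int
  assumes "n \<noteq> int k" and "n \<noteq> - int k"
  shows "integral {0..2*pi} (\<lambda>t. complex_of_real (sin (real k * t)) * cis (- (of_int n * t))) = 0"
proof -
  have integrand: "(\<lambda>t. complex_of_real (sin (real k * t)) * cis (- (of_int n * t)))
      = (\<lambda>t. (\<i> / 2) * (cis (of_int (- int k - n) * t) - cis (of_int (int k - n) * t)))"
    by (simp add: fun_eq_iff complex_eq_iff field_simps sin_add cos_add sin_diff cos_diff)
  have integrable: "(\<lambda>t. cis (of_int m * t)) integrable_on {0..2*pi}" for m :: int
    by (intro integrable_continuous_interval continuous_intros)
  show ?thesis
    unfolding integrand integral_mult_right integral_diff[OF integrable integrable]
    using assms integral_cis_nx_0_2pi[of "- int k - n"] integral_cis_nx_0_2pi[of "int k - n"]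
    by simp
qed

text \<open>Integrals over boxes in \<real>^2 are transported to \<real> \<times> \<real>, where Fubini
  (integral_prod_continuous) is available.\<close>

definition pair_of_vec2 :: "real^2 \<Rightarrow> real \<times> real" where
  "pair_of_vec2 x = (x$1, x$2)"

definition vec2_of_pair :: "real \<times> real \<Rightarrow> real^2" where
  "vec2_of_pair z = (\<chi> i. if i = 1 then fst z else snd z)"

lemma vec2_of_pair_inverse [simp]: "vec2_of_pair (pair_of_vec2 x) = x"
  by (simp add: vec2_of_pair_def pair_of_vec2_def vec_eq_iff forall_2)

lemma pair_of_vec2_inverse [simp]: "pair_of_vec2 (vec2_of_pair z) = z"
  by (simp add: vec2_of_pair_def pair_of_vec2_def)

lemma image_pair_of_vec2: "pair_of_vec2 ` A = vec2_of_pair -` A"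
  by (auto simp: image_iff) (metis vec2_of_pair_inverse pair_of_vec2_inverse)

lemma image_vec2_of_pair: "vec2_of_pair ` B = pair_of_vec2 -` B"
  by (auto simp: image_iff) (metis vec2_of_pair_inverse pair_of_vec2_inverse)

lemma exists_2: "(\<exists>i::2. P i) \<longleftrightarrow> P 1 \<or> P 2"
  using forall_2[of "\<lambda>i. \<not> P i"] by blast

lemma pair_of_vec2_cbox: "pair_of_vec2 ` cbox u v = cbox (pair_of_vec2 u) (pair_of_vec2 v)"
  unfolding image_pair_of_vec2 set_eq_iff split_paired_All
  by (simp add: vec2_of_pair_def pair_of_vec2_def mem_box_cart forall_2)

lemma vec2_of_pair_cbox: "vec2_of_pair ` cbox a b = cbox (vec2_of_pair a) (vec2_of_pair b)"
  unfolding image_vec2_of_pair set_eq_iff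
  by (cases a; cases b) (simp add: vec2_of_pair_def pair_of_vec2_def mem_box_cart forall_2)

lemma measure_pair_of_vec2_cbox: "measure lborel (pair_of_vec2 ` cbox u v) = measure lborel (cbox u v)"
proof -
  have "measure lborel (pair_of_vec2 ` cbox u v)
      = measure lborel (cbox (u$1) (v$1)) * measure lborel (cbox (u$2) (v$2))"
    unfolding pair_of_vec2_cbox by (simp add: pair_of_vec2_def content_Pair)
  also have "\<dots> = measure lborel (cbox u v)"
    by (auto simp: content_cbox_if_cart interval_eq_empty_cart UNIV_2 exists_2 content_real_if)
  finally show ?thesis .
qed

lemma integral_cbox_vec2_product:
  fixes f g :: "real \<Rightarrow> 'a::{real_normed_field,banach}" and u v :: "real^2"
  assumes f: "continuous_on {u$1..v$1} f" and g: "continuous_on {u$2..v$2} g"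
  shows "integral (cbox u v) (\<lambda>y. f (y$1) * g (y$2)) = integral {u$1..v$1} f * integral {u$2..v$2} g"
proof -
  let ?B = "cbox (pair_of_vec2 u) (pair_of_vec2 v)"
  define F where "F z = f (fst z) * g (snd z)" for z
  have F_cont: "continuous_on ?B F"
    unfolding F_def pair_of_vec2_def
    by (intro continuous_on_mult continuous_on_compose2[OF f continuous_on_fst]
        continuous_on_compose2[OF g continuous_on_snd]) (auto simp: cbox_Pair_iff)
  then have F_integral: "integral ?B F = integral {u$1..v$1} f * integral {u$2..v$2} g"
    unfolding pair_of_vec2_def
    by (simp add: integral_prod_continuous F_def integral_mult_left integral_mult_right)
  have "((\<lambda>y. F (pair_of_vec2 y)) has_integral (1 / 1) *\<^sub>R integral ?B F) (vec2_of_pair ` ?B)"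
  proof (rule has_integral_twiddle)
    show "continuous (at x) pair_of_vec2" for x
      unfolding pair_of_vec2_def by (intro continuous_intros)
    show "\<exists>w z. pair_of_vec2 ` cbox a b = cbox w z" for a b
      using pair_of_vec2_cbox by blast
    show "\<exists>w z. vec2_of_pair ` cbox a b = cbox w z" for a b
      using vec2_of_pair_cbox by blast
    show "(F has_integral integral ?B F) ?B"
      using F_cont by (intro integrable_integral integrable_continuous)
  qed (simp_all add: measure_pair_of_vec2_cbox)
  moreover have "vec2_of_pair ` ?B = cbox u v"
    by (simp add: vec2_of_pair_cbox)
  ultimately show ?thesis
    using F_integral by (simp add: F_def pair_of_vec2_def integral_unique)
qed

lemma integral_torus_box_product:
  fixes f g :: "real \<Rightarrow> 'a::{real_normed_field,banach}"
  assumes "continuous_on {0..2*pi} f" and "continuous_on {0..2*pi} g"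
  shows "integral torus_box (\<lambda>y. f (y$1) * g (y$2)) = integral {0..2*pi} f * integral {0..2*pi} g"
  using assms unfolding torus_box_def by (simp add: integral_cbox_vec2_product)

lemma has_integral_sin_nx_0_2pi:
  assumes "k > 0"
  shows "((\<lambda>t. sin (real k * t)) has_integral 0) {0..2*pi}"
proof -
  have "((\<lambda>t. - cos (real k * t) / real k) has_vector_derivative sin (real k * t)) (at t within {0..2*pi})"
    for t
    unfolding has_real_derivative_iff_has_vector_derivative[symmetric] using assms
    by (auto intro!: derivative_eq_intros)
  then have "((\<lambda>t. sin (real k * t)) has_integral
      - cos (real k * (2 * pi)) / real k - - cos (real k * 0) / real k) {0..2*pi}"
    by (intro fundamental_theorem_of_calculus) auto
  moreover have "cos (real k * (2 * pi)) = 1"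
    using cos_2npi[of k] by (simp add: mult_ac)
  ultimately show ?thesis
    by simp
qed

lemma has_integral_sin_nx_squared_0_2pi:
  assumes "k > 0"
  shows "((\<lambda>t. (sin (real k * t))\<^sup>2) has_integral pi) {0..2*pi}"
proof -
  have "((\<lambda>t. t / 2 - sin (2 * real k * t) / (4 * real k)) has_vector_derivative (sin (real k * t))\<^sup>2)
      (at t within {0..2*pi})" for t
  proof -
    have "((\<lambda>t. t / 2 - sin (2 * real k * t) / (4 * real k)) has_real_derivative
        1 / 2 - cos (2 * real k * t) * (2 * real k) / (4 * real k)) (at t within {0..2*pi})"
      by (auto intro!: derivative_eq_intros)
    moreover have "1 / 2 - cos (2 * real k * t) * (2 * real k) / (4 * real k) = (sin (real k * t))\<^sup>2"
      using assms cos_double_sin[of "real k * t"] by (simp add: mult.assoc field_simps)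
    ultimately show ?thesis
      by (simp add: has_real_derivative_iff_has_vector_derivative)
  qed
  then have "((\<lambda>t. (sin (real k * t))\<^sup>2) has_integral
      (2 * pi / 2 - sin (2 * real k * (2 * pi)) / (4 * real k)) - (0 / 2 - sin (2 * real k * 0) / (4 * real k)))
      {0..2*pi}"
    by (intro fundamental_theorem_of_calculus) auto
  moreover have "sin (2 * real k * (2 * pi)) = 0"
    using sin_2npi[of "2 * k"] by (simp add: mult_ac)
  ultimately show ?thesis
    by simp
qed

lemma fcoef_sin_second_coordinate:
  fixes k :: nat and c :: real
  assumes "n \<noteq> (0, int k)" and "n \<noteq> (0, - int k)"
  shows "fcoef (\<lambda>y. c * sin (real k * y$2)) n = 0"
proof -
  obtain n1 n2 where n: "n = (n1, n2)"
    by fastforce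
  define g where "g = (\<lambda>t. of_real c * (of_real (sin (real k * t)) * cis (- (of_int n2 * t))))"
  have integrand: "(\<lambda>y::real^2. complex_of_real (c * sin (real k * y$2)) *
        cis (- (of_int (fst n) * y$1 + of_int (snd n) * y$2)))
      = (\<lambda>y. cis (of_int (- n1) * y$1) * g (y$2))"
    by (simp add: fun_eq_iff n g_def cis_mult algebra_simps)
  have continuous: "continuous_on {0..2*pi} (\<lambda>s. cis (of_int (- n1) * s))" "continuous_on {0..2*pi} g"
    unfolding g_def by (intro continuous_intros)+
  have "integral {0..2*pi} (\<lambda>s. cis (of_int (- n1) * s)) * integral {0..2*pi} g = 0"
  proof (cases "n1 = 0")
    case True
    then have "integral {0..2*pi} g = 0"
      using assms integral_sin_nx_cis_0_2pi[of n2 k] by (simp add: n g_def integral_mult_right)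
    then show ?thesis by simp
  qed (use integral_cis_nx_0_2pi[of "- n1"] in simp)
  then show ?thesis
    unfolding fcoef_def integrand integral_torus_box_product[OF continuous] by simp
qed

lemma projMv_eq_0_if_fcoef_vanish:
  assumes "\<And>n j. n \<in> modes M \<Longrightarrow> fcoef (\<lambda>y. w y $ j) n = 0"
  shows "projMv M w x = 0"
  using assms by (simp add: projMv_def projM_def vec_eq_iff)

lemma L2norm_scaleR: "L2norm (\<lambda>x. c *\<^sub>R w x) = \<bar>c\<bar> * L2norm w"
  by (simp add: L2norm_def power_mult_distrib real_sqrt_mult integral_mult_right)

lemma frechet_derivative_const: "frechet_derivative (\<lambda>x. c) (at x) = (\<lambda>h. 0)"
  using frechet_derivative_at[OF has_derivative_const] by simp

lemma pgrad_const: "pgrad (\<lambda>x. c) x = 0"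
  by (simp add: pgrad_def frechet_derivative_const vec_eq_iff)

lemma in_V3_zero: "in_V3 (\<lambda>x. 0)"
  by (simp add: in_V3_def periodic2_def divergence_def frechet_derivative_const fcoef_def)

lemma fluid_sol_steady:
  assumes "in_V3 w" and "\<And>t x. t \<ge> 0 \<Longrightarrow> F t x = frechet_derivative w (at x) (w x)"
  shows "fluid_sol F (\<lambda>t. w) (\<lambda>t x. 0)"
  using assms by (simp add: fluid_sol_def periodic2_def pgrad_const)

definition shear_flow :: "nat \<Rightarrow> real^2 \<Rightarrow> real^2" where
  "shear_flow k x = sin (real k * x$2) *\<^sub>R axis 1 1"

lemma shear_flow_component: "(c *\<^sub>R shear_flow k y) $ j = (c * axis 1 1 $ j) * sin (real k * y$2)"
  by (simp add: shear_flow_def)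

lemma has_derivative_shear_flow:
  "(shear_flow k has_derivative (\<lambda>h. (real k * cos (real k * x$2) * h$2) *\<^sub>R axis 1 1)) (at x)"
  unfolding shear_flow_def
  by (auto intro!: derivative_eq_intros bounded_linear.has_derivative[OF bounded_linear_vec_nth])

lemma frechet_derivative_shear_flow:
  "frechet_derivative (shear_flow k) (at x) = (\<lambda>h. (real k * cos (real k * x$2) * h$2) *\<^sub>R axis 1 1)"
  using frechet_derivative_at[OF has_derivative_shear_flow] by simp

lemma divergence_shear_flow: "divergence (shear_flow k) x = 0"
  by (simp add: divergence_def frechet_derivative_shear_flow UNIV_2 axis_def)

lemma shear_flow_self_advection: "frechet_derivative (shear_flow k) (at x) (shear_flow k x) = 0"
  by (simp add: frechet_derivative_shear_flow shear_flow_def axis_def)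

lemma periodic2_shear_flow: "periodic2 (shear_flow k)"
  unfolding periodic2_def
proof (intro allI)
  fix x :: "real^2" and i :: 2
  have "sin (real k * (x$2 + 2 * pi)) = sin (real k * x$2 + 2 * real k * pi)"
    by (simp add: algebra_simps)
  also have "\<dots> = sin (real k * x$2)"
    by (simp add: sin_add)
  finally show "shear_flow k (x + (2 * pi) *\<^sub>R axis i 1) = shear_flow k x"
    using exhaust_2[of i] by (auto simp: shear_flow_def axis_def)
qed

lemma integral_shear_flow:
  assumes "k > 0"
  shows "integral torus_box (shear_flow k) = 0"
proof -
  have "integral torus_box (\<lambda>y::real^2. 1 * sin (real k * y$2)) = 0"
    using integral_torus_box_product[of "\<lambda>s. 1" "\<lambda>t. sin (real k * t)"]
      integral_unique[OF has_integral_sin_nx_0_2pi[OF assms]]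
    by (simp add: continuous_intros)
  moreover have "(\<lambda>y::real^2. sin (real k * y$2)) integrable_on torus_box"
    unfolding torus_box_def by (intro integrable_continuous continuous_intros)
  ultimately have "((\<lambda>y::real^2. sin (real k * y$2)) has_integral 0) torus_box"
    using integrable_integral by fastforce
  from has_integral_scaleR_left[OF this, of "axis 1 1"] show ?thesis
    unfolding shear_flow_def[abs_def] scale_zero_left by (rule integral_unique)
qed

lemma fcoef_shear_flow:
  assumes "n \<noteq> (0, int k)" and "n \<noteq> (0, - int k)"
  shows "fcoef (\<lambda>y. (c *\<^sub>R shear_flow k y) $ j) n = 0"
  unfolding shear_flow_component using assms by (rule fcoef_sin_second_coordinate)

lemma in_V3_shear_flow:
  assumes "k > 0"
  shows "in_V3 (shear_flow k)"
proof -
  let ?energy = "\<lambda>n::int \<times> int. (real_of_int ((fst n)\<^sup>2 + (snd n)\<^sup>2)) ^ 3 *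
    (\<Sum>j\<in>UNIV. (cmod (fcoef (\<lambda>y. shear_flow k y $ j) n))\<^sup>2)"
  have "?energy n = 0" if "n \<notin> {(0, int k), (0, - int k)}" for n
    using that fcoef_shear_flow[where c = 1 and n = n] by simp
  then have "{n \<in> UNIV. ?energy n \<noteq> 0} \<subseteq> {(0, int k), (0, - int k)}"
    by blast
  then have "?energy summable_on UNIV"
    by (intro finite_nonzero_values_imp_summable_on) (rule finite_subset, auto)
  moreover have "shear_flow k differentiable (at x)" for x
    using has_derivative_shear_flow by (auto simp: differentiable_def)
  ultimately show ?thesis
    unfolding in_V3_def
    by (simp add: periodic2_shear_flow divergence_shear_flow integral_shear_flow[OF assms])
qed

lemma projMv_shear_flow:
  assumes "M < k"
  shows "projMv M (\<lambda>y. c *\<^sub>R shear_flow k y) x = 0"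
proof (rule projMv_eq_0_if_fcoef_vanish, rule fcoef_shear_flow)
  fix n assume "n \<in> modes M"
  then have "(fst n)\<^sup>2 + (snd n)\<^sup>2 < (int k)\<^sup>2"
    using assms power_strict_mono[of "int M" "int k" 2] by (auto simp: modes_def)
  then show "n \<noteq> (0, int k)" and "n \<noteq> (0, - int k)"
    by auto
qed

lemma L2norm_shear_flow:
  assumes "k > 0"
  shows "L2norm (shear_flow k) = sqrt 2 * pi"
proof -
  have "integral torus_box (\<lambda>y::real^2. 1 * (sin (real k * y$2))\<^sup>2) = 2 * pi * pi"
    using integral_torus_box_product[of "\<lambda>s. 1" "\<lambda>t. (sin (real k * t))\<^sup>2"]
      integral_unique[OF has_integral_sin_nx_squared_0_2pi[OF assms]]
    by (simp add: continuous_intros)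
  then show ?thesis
    by (simp add: L2norm_def shear_flow_def real_sqrt_mult)
qed

theorem corollary4p5:
  fixes M :: nat and \<mu> :: real
  assumes "M > 0" and "\<mu> > 0"
  shows "\<exists>u p. fluid_sol (\<lambda>t x. 0) u p \<and>
           (\<exists>v q. fluid_sol (\<lambda>t x. \<mu> *\<^sub>R projMv M (\<lambda>y. u t y - v t y) x) v q \<and>
              \<not> ((\<lambda>t. L2norm (\<lambda>x. u t x - v t x)) \<longlongrightarrow> 0) at_top)"
proof (intro exI conjI)
  define k where "k = M + 1"
  have "k > 0" and "M < k"
    by (simp_all add: k_def)
  show "fluid_sol (\<lambda>t x. 0) (\<lambda>t x. 0) (\<lambda>t x. 0)"
    by (rule fluid_sol_steady) (simp_all add: in_V3_zero frechet_derivative_const)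
  have nudging_vanishes: "projMv M (\<lambda>y. - shear_flow k y) x = 0" for x
    using projMv_shear_flow[OF \<open>M < k\<close>, of "-1"] by simp
  show "fluid_sol (\<lambda>t x. \<mu> *\<^sub>R projMv M (\<lambda>y. 0 - shear_flow k y) x) (\<lambda>t. shear_flow k) (\<lambda>t x. 0)"
    by (rule fluid_sol_steady)
      (simp_all add: in_V3_shear_flow[OF \<open>k > 0\<close>] nudging_vanishes shear_flow_self_advection)
  have "L2norm (\<lambda>x. - shear_flow k x) = sqrt 2 * pi"
    using L2norm_scaleR[of "-1" "shear_flow k"] L2norm_shear_flow[OF \<open>k > 0\<close>] by simp
  then show "\<not> ((\<lambda>t::real. L2norm (\<lambda>x. 0 - shear_flow k x)) \<longlongrightarrow> 0) at_top"
    by (simp add: tendsto_const_iff)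
qed

end
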